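(* Let $\mathsf{K}$ be a free simplicial $\mathbb{Z}_2$-complex with $\operatorname{ind}(\mathsf{K})=n-1$, and let $\lambda_1,\ldots,\lambda_n$ be $n$ compatible Fan labelings of $\mathsf{K}$ with labels in $\{\pm1,\ldots,\pm n\}$, such that moreover $\lambda_i(u)+\lambda_{i'}(u)\neq0$ for every vertex $u$ and all $i,i'\in[n]$. Then for every $(\alpha_1,\ldots,\alpha_n)\in\{-1,+1\}^n$, there exist a simplex $\sigma$ of $\mathsf{K}$ and a permutation $\pi$ of $[n]$ such that for each $j\in[n]$, the integer $\alpha_j\cdot j$ is a value taken by $\lambda_{\pi(j)}$ on some vertex of $\sigma$.
   Context: A free simplicial $\mathbb{Z}_2$-complex is a simplicial complex with a free simplicial $\mathbb{Z}_2$-action. A Fan labeling is a labeling of its vertices by non-zero integers such that (i) no two adjacent vertices have labels summing to zero, and (ii) the two vertices of any orbit have labels summing to zero. Fan labelings $\lambda_1,\ldots,\lambda_m$ are compatible if $\lambda_i(u)+\lambda_{i'}(u')\neq0$ for any two adjacent (distinct) vertices $u,u'$ and any $i,i'$. The $\mathbb{Z}_2$-index $\operatorname{ind}(\mathsf{K})$ is the minimal $d$ such that there is a continuous map from $\mathsf{K}$ to $\mathcal{S}^d$ commuting with the $\mathbb{Z}_2$-actions (antipodal map on $\mathcal{S}^d$). *)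

theory Defs
  imports "HOL-Analysis.Analysis"
begin

definition simplicial_complex :: "'a set set \<Rightarrow> bool" where
  "simplicial_complex K \<longleftrightarrow> finite K \<and>
     (\<forall>\<sigma>\<in>K. finite \<sigma> \<and> \<sigma> \<noteq> {} \<and> (\<forall>\<tau>. \<tau> \<subseteq> \<sigma> \<and> \<tau> \<noteq> {} \<longrightarrow> \<tau> \<in> K))"

definition vertices :: "'a set set \<Rightarrow> 'a set" where
  "vertices K = \<Union>K"

definition adjacent :: "'a set set \<Rightarrow> 'a \<Rightarrow> 'a \<Rightarrow> bool" where
  "adjacent K u u' \<longleftrightarrow> u \<noteq> u' \<and> {u, u'} \<in> K"

text \<open>A free simplicial Z2-complex: the involution \<nu> on the vertices is a simplicial
  map, has no fixed vertex, and fixes no simplex (equivalently, the induced action on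
  the geometric realization is free).\<close>
definition free_Z2_complex :: "'a set set \<Rightarrow> ('a \<Rightarrow> 'a) \<Rightarrow> bool" where
  "free_Z2_complex K \<nu> \<longleftrightarrow> simplicial_complex K \<and>
     (\<forall>v\<in>vertices K. \<nu> v \<in> vertices K \<and> \<nu> (\<nu> v) = v \<and> \<nu> v \<noteq> v) \<and>
     (\<forall>\<sigma>\<in>K. \<nu> ` \<sigma> \<in> K \<and> \<nu> ` \<sigma> \<noteq> \<sigma>)"

text \<open>Geometric realization: points are barycentric coordinate functions supported
  on a simplex; topology is the (product) topology of functions into the reals.\<close>
definition geom :: "'a set set \<Rightarrow> ('a \<Rightarrow> real) set" where
  "geom K = {x. (\<forall>v. 0 \<le> x v) \<and> (\<exists>\<sigma>\<in>K. (\<forall>v. v \<notin> \<sigma> \<longrightarrow> x v = 0) \<and> sum x \<sigma> = 1)}"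

definition sphere_d :: "nat \<Rightarrow> (nat \<Rightarrow> real) set" where
  "sphere_d d = {y. (\<forall>i>d. y i = 0) \<and> (\<Sum>i\<le>d. (y i)\<^sup>2) = 1}"

definition Z2_map_to_sphere :: "'a set set \<Rightarrow> ('a \<Rightarrow> 'a) \<Rightarrow> nat \<Rightarrow> bool" where
  "Z2_map_to_sphere K \<nu> d \<longleftrightarrow> (\<exists>f :: ('a \<Rightarrow> real) \<Rightarrow> (nat \<Rightarrow> real).
      continuous_on (geom K) f \<and> f ` geom K \<subseteq> sphere_d d \<and>
      (\<forall>x\<in>geom K. f (x \<circ> \<nu>) = - f x))"

definition Z2_index :: "'a set set \<Rightarrow> ('a \<Rightarrow> 'a) \<Rightarrow> int" where
  "Z2_index K \<nu> = (if K = {} then -1 else int (LEAST d. Z2_map_to_sphere K \<nu> d))"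

definition fan_labeling :: "'a set set \<Rightarrow> ('a \<Rightarrow> 'a) \<Rightarrow> ('a \<Rightarrow> int) \<Rightarrow> bool" where
  "fan_labeling K \<nu> lab \<longleftrightarrow>
     (\<forall>v\<in>vertices K. lab v \<noteq> 0) \<and>
     (\<forall>u u'. adjacent K u u' \<longrightarrow> lab u + lab u' \<noteq> 0) \<and>
     (\<forall>v\<in>vertices K. lab v + lab (\<nu> v) = 0)"

definition compatible_labelings :: "'a set set \<Rightarrow> nat set \<Rightarrow> (nat \<Rightarrow> 'a \<Rightarrow> int) \<Rightarrow> bool" where
  "compatible_labelings K I lab \<longleftrightarrow>
     (\<forall>i\<in>I. \<forall>i'\<in>I. \<forall>u u'. adjacent K u u' \<longrightarrow> lab i u + lab i' u' \<noteq> 0)"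

end

theory Submission
  imports Defs
begin

text \<open>For a point x of the realization let h(x) be the vector whose j-th coordinate is the
  barycentric average, over the vertices of the carrier simplex, of the number of labelings giving
  label j minus the number giving label -j. This map is odd. Projecting h onto the hyperplane
  orthogonal to \<alpha> leaves an odd map into an (n - 1)-dimensional space; if it never vanished,
  normalisation would give an equivariant map to the (n - 2)-sphere, contradicting ind K = n - 1.
  So at some x the vector h(x) is a multiple b \<alpha>. Compatibility forces all labels of absolute
  value j on a simplex to have the same sign, so the weights of the labels form a matrix with unit
  row sums whose column sums are the |h_j(x)| = |b|; hence |b| = 1, the matrix is doubly
  stochastic, and a positive diagonal (Hall) gives the permutation. The sign of b decides whether
  the carrier simplex or its antipode is the required one.\<close>

lemma hall_condition_remove_representative:
  assumes "finite J" "\<And>j. j \<in> J \<Longrightarrow> finite (S j)" "j0 \<in> J"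
    and surplus: "\<And>T. T \<subseteq> J \<Longrightarrow> T \<noteq> {} \<Longrightarrow> T \<noteq> J \<Longrightarrow> card T < card (\<Union>(S ` T))"
    and "T \<subseteq> J - {j0}"
  shows "card T \<le> card (\<Union>((\<lambda>j. S j - {a}) ` T))"
proof (cases "T = {}")
  case False
  have "finite (\<Union>(S ` T))"
    using assms(1,2,5) finite_subset by (metis Diff_subset finite_UN_I subset_eq)
  moreover have "\<Union>((\<lambda>j. S j - {a}) ` T) = \<Union>(S ` T) - {a}" by auto
  moreover have "card T < card (\<Union>(S ` T))" using surplus False assms(3,5) by blast
  ultimately show ?thesis by (simp add: card_Diff_singleton_if) linarith
qed simp

lemma hall_condition_remove_critical:
  assumes "finite J" "\<And>j. j \<in> J \<Longrightarrow> finite (S j)"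
    and hall: "\<And>T. T \<subseteq> J \<Longrightarrow> card T \<le> card (\<Union>(S ` T))"
    and "T \<subseteq> J" "card (\<Union>(S ` T)) \<le> card T" "R \<subseteq> J - T"
  shows "card R \<le> card (\<Union>((\<lambda>j. S j - \<Union>(S ` T)) ` R))"
proof -
  let ?U = "\<Union>(S ` T)" and ?R' = "\<Union>((\<lambda>j. S j - \<Union>(S ` T)) ` R)"
  have "finite R" "finite T" using assms(1,4,6) finite_subset by blast+
  then have fin: "finite R" "finite T" "finite ?U" "finite ?R'"
    using assms(2,4,6) by (auto simp: subset_iff)
  have "card R + card T = card (R \<union> T)"
    using fin assms(6) by (subst card_Un_disjoint) auto
  also have "\<dots> \<le> card (\<Union>(S ` (R \<union> T)))" using hall assms(4,6) by blast
  also have "\<dots> \<le> card (?R' \<union> ?U)" using fin by (intro card_mono) auto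
  also have "\<dots> \<le> card ?R' + card ?U" by (rule card_Un_le)
  finally show ?thesis using assms(5) by linarith
qed

lemma inj_on_if_disjoint_images:
  assumes "inj_on g T" "inj_on h (J - T)" "g ` T \<subseteq> U" "h ` (J - T) \<inter> U = {}" "T \<subseteq> J"
  shows "inj_on (\<lambda>j. if j \<in> T then g j else h j) J"
proof -
  let ?f = "\<lambda>j. if j \<in> T then g j else h j"
  have "inj_on ?f (T \<union> (J - T))"
  proof (subst inj_on_Un, intro conjI)
    show "inj_on ?f T" "inj_on ?f (J - T)"
      using assms(1,2) by (auto simp: inj_on_def)
    show "?f ` (T - (J - T)) \<inter> ?f ` (J - T - T) = {}"
      using assms(3,4) by auto
  qed
  moreover have "T \<union> (J - T) = J" using assms(5) by blast
  ultimately show ?thesis by simp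
qed

theorem hall_marriage:
  assumes "finite J" "\<And>j. j \<in> J \<Longrightarrow> finite (S j)"
    and "\<And>T. T \<subseteq> J \<Longrightarrow> card T \<le> card (\<Union>(S ` T))"
  shows "\<exists>f. inj_on f J \<and> (\<forall>j\<in>J. f j \<in> S j)"
  using assms
proof (induction "card J" arbitrary: J S rule: less_induct)
  case less
  note fin = less.prems(1,2) and hall = less.prems(3)
  show ?case
  proof (cases "\<forall>T. T \<subseteq> J \<longrightarrow> T \<noteq> {} \<longrightarrow> T \<noteq> J \<longrightarrow> card T < card (\<Union>(S ` T))")
    case surplus: True
    show ?thesis
    proof (cases "J = {}")
      case False
      then obtain j0 where j0: "j0 \<in> J" by blast
      have "card {j0} \<le> card (S j0)" using hall[of "{j0}"] j0 by simp
      then obtain a where a: "a \<in> S j0" by (cases "S j0 = {}") auto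
      have "\<exists>f. inj_on f (J - {j0}) \<and> (\<forall>j\<in>J - {j0}. f j \<in> S j - {a})"
      proof (rule less.hyps)
        show "card (J - {j0}) < card J" using fin(1) j0 by (rule card_Diff1_less)
        show "finite (J - {j0})" "\<And>j. j \<in> J - {j0} \<Longrightarrow> finite (S j - {a})"
          using fin by auto
        show "\<And>T. T \<subseteq> J - {j0} \<Longrightarrow> card T \<le> card (\<Union>((\<lambda>j. S j - {a}) ` T))"
          by (rule hall_condition_remove_representative[OF fin j0 surplus[rule_format]])
      qed
      then obtain f where f: "inj_on f (J - {j0})" "\<forall>j\<in>J - {j0}. f j \<in> S j - {a}"
        by blast
      have "inj_on (f(j0 := a)) (insert j0 (J - {j0}))"
        unfolding inj_on_insert using f by (auto simp: inj_on_def)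
      moreover have "insert j0 (J - {j0}) = J" using j0 by blast
      ultimately show ?thesis using f a by (intro exI[of _ "f(j0 := a)"]) auto
    qed simp
  next
    case False
    then obtain T where T: "T \<subseteq> J" "T \<noteq> {}" "T \<noteq> J" "card (\<Union>(S ` T)) \<le> card T"
      by (meson not_le)
    let ?U = "\<Union>(S ` T)"
    have "finite T" using T(1) fin(1) finite_subset by blast
    have "0 < card T" using \<open>finite T\<close> T(2) by (simp add: card_gt_0_iff)
    have smaller: "card T < card J" "card (J - T) < card J"
      using psubset_card_mono[OF fin(1)] T(1,3) card_Diff_subset[OF \<open>finite T\<close> T(1)]
        card_mono[OF fin(1) T(1)] \<open>0 < card T\<close> by auto
    have "\<exists>g. inj_on g T \<and> (\<forall>j\<in>T. g j \<in> S j)"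
    proof (rule less.hyps[OF smaller(1) \<open>finite T\<close>])
      show "\<And>j. j \<in> T \<Longrightarrow> finite (S j)" using fin(2) T(1) by blast
      show "card R \<le> card (\<Union>(S ` R))" if "R \<subseteq> T" for R
        using that T(1) by (intro hall) (rule subset_trans)
    qed
    then obtain g where g: "inj_on g T" "\<forall>j\<in>T. g j \<in> S j" by blast
    have "\<exists>h. inj_on h (J - T) \<and> (\<forall>j\<in>J - T. h j \<in> S j - ?U)"
    proof (rule less.hyps[OF smaller(2)])
      show "finite (J - T)" "\<And>j. j \<in> J - T \<Longrightarrow> finite (S j - ?U)" using fin by auto
      show "\<And>R. R \<subseteq> J - T \<Longrightarrow> card R \<le> card (\<Union>((\<lambda>j. S j - ?U) ` R))"
        by (rule hall_condition_remove_critical[OF fin hall T(1,4)])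
    qed
    then obtain h where h: "inj_on h (J - T)" "\<forall>j\<in>J - T. h j \<in> S j - ?U" by blast
    let ?f = "\<lambda>j. if j \<in> T then g j else h j"
    have "inj_on ?f J"
      by (rule inj_on_if_disjoint_images[OF g(1) h(1) _ _ T(1), where U = ?U]) (use g(2) h(2) in auto)
    moreover have "\<forall>j\<in>J. ?f j \<in> S j" using g(2) h(2) by simp
    ultimately show ?thesis by auto
  qed
qed

lemma doubly_stochastic_positive_permutation:
  fixes A :: "'i \<Rightarrow> 'i \<Rightarrow> real"
  assumes "finite I"
    and nonneg: "\<And>i j. i \<in> I \<Longrightarrow> j \<in> I \<Longrightarrow> 0 \<le> A i j"
    and rows: "\<And>i. i \<in> I \<Longrightarrow> (\<Sum>j\<in>I. A i j) = 1"
    and cols: "\<And>j. j \<in> I \<Longrightarrow> (\<Sum>i\<in>I. A i j) = 1"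
  shows "\<exists>\<pi>. \<pi> permutes I \<and> (\<forall>j\<in>I. 0 < A (\<pi> j) j)"
proof -
  define S where "S j = {i \<in> I. 0 < A i j}" for j
  have hall: "card T \<le> card (\<Union>(S ` T))" if T: "T \<subseteq> I" for T
  proof -
    let ?N = "\<Union>(S ` T)"
    have N: "?N \<subseteq> I" unfolding S_def by auto
    have "real (card T) = (\<Sum>j\<in>T. \<Sum>i\<in>I. A i j)" using cols T by (simp add: subset_iff)
    also have "\<dots> = (\<Sum>j\<in>T. \<Sum>i\<in>?N. A i j)"
    proof (rule sum.cong[OF refl])
      fix j assume "j \<in> T"
      then have "\<forall>i\<in>I - ?N. A i j = 0" using nonneg T by (force simp: S_def)
      then show "(\<Sum>i\<in>I. A i j) = (\<Sum>i\<in>?N. A i j)"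
        using sum.mono_neutral_right[OF \<open>finite I\<close> N] by simp
    qed
    also have "\<dots> = (\<Sum>i\<in>?N. \<Sum>j\<in>T. A i j)" by (rule sum.swap)
    also have "\<dots> \<le> (\<Sum>i\<in>?N. \<Sum>j\<in>I. A i j)"
      using \<open>finite I\<close> T N nonneg by (intro sum_mono sum_mono2) auto
    also have "\<dots> = real (card ?N)" using rows N by (simp add: subset_iff)
    finally show ?thesis by simp
  qed
  have "finite (S j)" for j using \<open>finite I\<close> by (simp add: S_def)
  then have "\<exists>f. inj_on f I \<and> (\<forall>j\<in>I. f j \<in> S j)"
    by (rule hall_marriage[OF \<open>finite I\<close>]) (simp_all add: hall)
  then obtain f where f: "inj_on f I" "\<forall>j\<in>I. f j \<in> S j" by blast
  define \<pi> where "\<pi> j = (if j \<in> I then f j else j)" for j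
  have "f ` I = I" using f \<open>finite I\<close> by (intro endo_inj_surj) (auto simp: S_def)
  then have "bij_betw \<pi> I I"
    using f(1) by (auto simp: bij_betw_def \<pi>_def inj_on_def image_def)
  then have "\<pi> permutes I" by (rule bij_imp_permutes) (simp add: \<pi>_def)
  moreover have "\<forall>j\<in>I. 0 < A (\<pi> j) j" using f(2) by (simp add: \<pi>_def S_def)
  ultimately show ?thesis by blast
qed

lemma Z2_index_le:
  assumes "K \<noteq> {}" "Z2_map_to_sphere K \<nu> d"
  shows "Z2_index K \<nu> \<le> int d"
  using assms by (simp add: Z2_index_def Least_le)

lemma geom_nonempty:
  assumes "simplicial_complex K" "K \<noteq> {}"
  shows "geom K \<noteq> {}"
proof -
  obtain \<sigma> v where "\<sigma> \<in> K" "v \<in> \<sigma>" "finite \<sigma>"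
    using assms unfolding simplicial_complex_def by blast
  then have "(\<lambda>w. if w = v then 1 else 0) \<in> geom K"
    unfolding geom_def by (auto simp: sum.delta)
  then show ?thesis by blast
qed

lemma continuous_on_coordinate [continuous_intros]:
  "continuous_on S (\<lambda>x :: 'a \<Rightarrow> real. x u)"
  by (rule continuous_on_subset[OF continuous_on_product_coordinates]) simp

lemma Z2_map_to_sphere_normalize:
  fixes g :: "('a \<Rightarrow> real) \<Rightarrow> nat \<Rightarrow> real"
  assumes cont: "\<And>k. continuous_on (geom K) (\<lambda>x. g x k)"
    and odd: "\<And>x. x \<in> geom K \<Longrightarrow> g (x \<circ> \<nu>) = - g x"
    and nonzero: "\<And>x. x \<in> geom K \<Longrightarrow> \<exists>k\<le>d. g x k \<noteq> 0"
  shows "Z2_map_to_sphere K \<nu> d"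
proof -
  define r where "r x = sqrt (\<Sum>k\<le>d. (g x k)\<^sup>2)" for x
  define f where "f x k = (if k \<le> d then g x k / r x else 0)" for x k
  have r_pos: "0 < r x" if x: "x \<in> geom K" for x
  proof -
    obtain k where "k \<le> d" "g x k \<noteq> 0" using nonzero[OF x] by blast
    then have "0 < (\<Sum>k\<le>d. (g x k)\<^sup>2)" by (intro sum_pos2[of _ k]) auto
    then show ?thesis by (simp add: r_def)
  qed
  have "continuous_on (geom K) f"
  proof (rule continuous_on_coordinatewise_then_product)
    fix k
    show "continuous_on (geom K) (\<lambda>x. f x k)"
    proof (cases "k \<le> d")
      case True
      have "continuous_on (geom K) r" unfolding r_def by (intro continuous_intros cont)
      then have "continuous_on (geom K) (\<lambda>x. g x k / r x)"
        using r_pos by (intro continuous_on_divide cont) force+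
      then show ?thesis using True by (simp add: f_def)
    qed (simp add: f_def)
  qed
  moreover have "f x \<in> sphere_d d" if "x \<in> geom K" for x
  proof -
    have "(\<Sum>k\<le>d. (f x k)\<^sup>2) = (\<Sum>k\<le>d. (g x k)\<^sup>2) / (r x)\<^sup>2"
      by (simp add: f_def power_divide sum_divide_distrib)
    also have "\<dots> = 1" using r_pos[OF that] by (simp add: r_def)
    finally show ?thesis by (simp add: sphere_d_def f_def)
  qed
  moreover have "f (x \<circ> \<nu>) = - f x" if "x \<in> geom K" for x
    using odd[OF that] by (simp add: fun_eq_iff f_def r_def)
  ultimately show ?thesis unfolding Z2_map_to_sphere_def by blast
qed

definition label_sign :: "('a \<Rightarrow> int) \<Rightarrow> nat \<Rightarrow> 'a \<Rightarrow> real" where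
  "label_sign l j u = (if l u = int j then 1 else if l u = - int j then -1 else 0)"

definition label_weight :: "'a set \<Rightarrow> ('a \<Rightarrow> real) \<Rightarrow> ('a \<Rightarrow> int) \<Rightarrow> nat \<Rightarrow> real" where
  "label_weight \<sigma> x l j = (\<Sum>u\<in>\<sigma>. x u * \<bar>label_sign l j u\<bar>)"

definition label_vector ::
    "'a set \<Rightarrow> (nat \<Rightarrow> 'a \<Rightarrow> int) \<Rightarrow> nat \<Rightarrow> ('a \<Rightarrow> real) \<Rightarrow> nat \<Rightarrow> real" where
  "label_vector V lab n x j = (\<Sum>u\<in>V. x u * (\<Sum>i=1..n. label_sign (lab i) j u))"

text \<open>Orthogonal projection onto the hyperplane perpendicular to \<alpha>; for a sign vector \<alpha>
  the squared norm of \<alpha> is n.\<close>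
definition proj_perp :: "(nat \<Rightarrow> int) \<Rightarrow> nat \<Rightarrow> (nat \<Rightarrow> real) \<Rightarrow> nat \<Rightarrow> real" where
  "proj_perp \<alpha> n y j = y j - (\<Sum>k=1..n. of_int (\<alpha> k) * y k) / real n * of_int (\<alpha> j)"

lemma label_sign_cases: "label_sign l j u \<in> {-1, 0, 1}"
  by (simp add: label_sign_def)

lemma label_sign_nonzero_value:
  "label_sign l j u \<noteq> 0 \<Longrightarrow> of_int (l u) = label_sign l j u * real j"
  by (cases "l u = int j") (auto simp: label_sign_def)

lemma label_sign_uminus: "l v = - l u \<Longrightarrow> l u \<noteq> 0 \<Longrightarrow> label_sign l j v = - label_sign l j u"
  by (cases "l u = int j") (auto simp: label_sign_def)

lemma sum_abs_label_sign:
  assumes "1 \<le> \<bar>l u\<bar>" "\<bar>l u\<bar> \<le> int n"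
  shows "(\<Sum>j=1..n. \<bar>label_sign l j u\<bar>) = 1"
proof -
  have "(\<Sum>j=1..n. \<bar>label_sign l j u\<bar>) = (\<Sum>j=1..n. if j = nat \<bar>l u\<bar> then 1 else 0)"
    by (intro sum.cong refl) (auto simp: label_sign_def)
  also have "\<dots> = 1" using assms by (simp add: sum.delta') linarith
  finally show ?thesis .
qed

lemma sum_label_weight:
  assumes "finite \<sigma>" "\<And>u. u \<in> \<sigma> \<Longrightarrow> 1 \<le> \<bar>l u\<bar> \<and> \<bar>l u\<bar> \<le> int n"
  shows "(\<Sum>j=1..n. label_weight \<sigma> x l j) = sum x \<sigma>"
proof -
  have "(\<Sum>j=1..n. label_weight \<sigma> x l j) = (\<Sum>u\<in>\<sigma>. x u * (\<Sum>j=1..n. \<bar>label_sign l j u\<bar>))"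
    unfolding label_weight_def sum_distrib_left by (rule sum.swap)
  also have "\<dots> = sum x \<sigma>"
  proof (rule sum.cong[OF refl])
    fix u assume "u \<in> \<sigma>"
    then show "x u * (\<Sum>j=1..n. \<bar>label_sign l j u\<bar>) = x u"
      using assms(2) sum_abs_label_sign[of l u n] by simp
  qed
  finally show ?thesis .
qed

lemma continuous_on_label_vector [continuous_intros]:
  "continuous_on S (\<lambda>x. label_vector V lab n x j)"
  unfolding label_vector_def by (intro continuous_intros)

lemma continuous_on_proj_perp [continuous_intros]:
  "(\<And>k. continuous_on S (\<lambda>x. y x k)) \<Longrightarrow> continuous_on S (\<lambda>x. proj_perp \<alpha> n (y x) j)"
  unfolding proj_perp_def divide_inverse by (intro continuous_intros)

lemma proj_perp_uminus: "proj_perp \<alpha> n (- y) = - proj_perp \<alpha> n y"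
  by (simp add: fun_eq_iff proj_perp_def sum_negf)

lemma proj_perp_vanishing_imp_parallel:
  assumes "n \<ge> 1" "\<forall>j\<in>{1..n}. \<alpha> j \<in> {-1, 1}"
    and zero: "\<forall>j\<in>{1..n-1}. proj_perp \<alpha> n y j = 0"
  shows "\<exists>b. \<forall>j\<in>{1..n}. y j = b * of_int (\<alpha> j)"
proof -
  define b where "b = (\<Sum>k=1..n. of_int (\<alpha> k) * y k) / real n"
  have sq: "of_int (\<alpha> j) * of_int (\<alpha> j) = (1 :: real)" if "j \<in> {1..n}" for j
  proof -
    have "\<alpha> j = -1 \<or> \<alpha> j = 1" using assms(2) that by auto
    then show ?thesis by auto
  qed
  have "(\<Sum>j=1..n. of_int (\<alpha> j) * proj_perp \<alpha> n y j)
      = (\<Sum>j=1..n. of_int (\<alpha> j) * y j - b * (of_int (\<alpha> j) * of_int (\<alpha> j)))"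
    unfolding proj_perp_def b_def[symmetric] by (simp add: algebra_simps)
  also have "\<dots> = (\<Sum>j=1..n. of_int (\<alpha> j) * y j) - b * (\<Sum>j=1..n. of_int (\<alpha> j) * of_int (\<alpha> j))"
    by (simp add: sum_subtractf sum_distrib_left)
  also have "\<dots> = 0" using sq assms(1) by (simp add: b_def)
  finally have "(\<Sum>j=1..n. of_int (\<alpha> j) * proj_perp \<alpha> n y j) = 0" .
  moreover have "(\<Sum>j\<in>{1..n} - {n}. of_int (\<alpha> j) * proj_perp \<alpha> n y j) = 0"
    using zero by (intro sum.neutral) auto
  ultimately have "of_int (\<alpha> n) * proj_perp \<alpha> n y n = 0"
    using sum.remove[of "{1..n}" n "\<lambda>j. of_int (\<alpha> j) * proj_perp \<alpha> n y j"] assms(1)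
    by (simp del: mult_eq_0_iff)
  then have "proj_perp \<alpha> n y n = 0" using sq[of n] assms(1) by auto
  then have "proj_perp \<alpha> n y j = 0" if "j \<in> {1..n}" for j
    using zero that by (cases "j = n") auto
  then show ?thesis unfolding proj_perp_def b_def[symmetric] by auto
qed

lemma simplicial_complex_face:
  "simplicial_complex K \<Longrightarrow> \<sigma> \<in> K \<Longrightarrow> \<tau> \<subseteq> \<sigma> \<Longrightarrow> \<tau> \<noteq> {} \<Longrightarrow> \<tau> \<in> K"
  unfolding simplicial_complex_def by blast

locale compatible_fan_labelings =
  fixes K :: "'a set set" and \<nu> :: "'a \<Rightarrow> 'a" and n :: nat and lab :: "nat \<Rightarrow> 'a \<Rightarrow> int"
  assumes free: "free_Z2_complex K \<nu>"
    and fan: "\<forall>i\<in>{1..n}. fan_labeling K \<nu> (lab i)"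
    and compatible: "compatible_labelings K {1..n} lab"
    and label_range: "\<forall>i\<in>{1..n}. \<forall>v\<in>vertices K. 1 \<le> \<bar>lab i v\<bar> \<and> \<bar>lab i v\<bar> \<le> int n"
    and not_opposite: "\<forall>i\<in>{1..n}. \<forall>i'\<in>{1..n}. \<forall>u\<in>vertices K. lab i u + lab i' u \<noteq> 0"
begin

lemma complex: "simplicial_complex K"
  using free by (simp add: free_Z2_complex_def)

lemma finite_vertices: "finite (vertices K)"
proof -
  have "finite K" "\<And>\<sigma>. \<sigma> \<in> K \<Longrightarrow> finite \<sigma>"
    using complex unfolding simplicial_complex_def by blast+
  then show ?thesis unfolding vertices_def by (rule finite_Union)
qed

lemma simplex_subset_vertices: "\<sigma> \<in> K \<Longrightarrow> \<sigma> \<subseteq> vertices K"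
  by (auto simp: vertices_def)

lemma antipode_simplex: "\<sigma> \<in> K \<Longrightarrow> \<nu> ` \<sigma> \<in> K"
  using free by (simp add: free_Z2_complex_def)

lemma antipode_vertex: "v \<in> vertices K \<Longrightarrow> \<nu> v \<in> vertices K"
  using free by (simp add: free_Z2_complex_def)

lemma antipode_antipode: "v \<in> vertices K \<Longrightarrow> \<nu> (\<nu> v) = v"
  using free by (simp add: free_Z2_complex_def)

lemma bij_betw_antipode: "bij_betw \<nu> (vertices K) (vertices K)"
  by (rule bij_betw_byWitness[where f' = \<nu>]) (auto simp: antipode_vertex antipode_antipode)

lemma lab_antipode:
  assumes "i \<in> {1..n}" "v \<in> vertices K"
  shows "lab i (\<nu> v) = - lab i v"
proof -
  have "fan_labeling K \<nu> (lab i)" using fan assms(1) by blast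
  then have "lab i v + lab i (\<nu> v) = 0" using assms(2) unfolding fan_labeling_def by blast
  then show ?thesis by simp
qed

lemma lab_nonzero:
  assumes "i \<in> {1..n}" "v \<in> vertices K"
  shows "lab i v \<noteq> 0"
  using label_range[rule_format, OF assms] by linarith

lemma no_opposite_labels_on_simplex:
  assumes "\<sigma> \<in> K" "i \<in> {1..n}" "i' \<in> {1..n}" "u \<in> \<sigma>" "u' \<in> \<sigma>"
  shows "lab i u + lab i' u' \<noteq> 0"
proof (cases "u = u'")
  case True
  have "u \<in> vertices K" using assms(1,4) simplex_subset_vertices by blast
  then show ?thesis using not_opposite[rule_format, OF assms(2,3)] True by blast
next
  case False
  have "{u, u'} \<in> K"
    by (rule simplicial_complex_face[OF complex assms(1)]) (use assms(4,5) in auto)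
  then have "adjacent K u u'" using False by (simp add: adjacent_def)
  then show ?thesis using compatible assms(2,3) unfolding compatible_labelings_def by blast
qed

lemma label_sign_uniform_on_simplex:
  assumes "\<sigma> \<in> K"
  obtains s :: real where "s \<in> {-1, 1}"
    and "\<forall>i\<in>{1..n}. \<forall>u\<in>\<sigma>. label_sign (lab i) j u = s * \<bar>label_sign (lab i) j u\<bar>"
proof (cases "\<exists>i\<in>{1..n}. \<exists>u\<in>\<sigma>. label_sign (lab i) j u \<noteq> 0")
  case True
  then obtain i0 u0 where i0: "i0 \<in> {1..n}" "u0 \<in> \<sigma>" "label_sign (lab i0) j u0 \<noteq> 0" by blast
  define s where "s = label_sign (lab i0) j u0"
  have s: "s \<in> {-1, 1}" using i0(3) label_sign_cases[of "lab i0" j u0] by (auto simp: s_def)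
  have "label_sign (lab i) j u = s * \<bar>label_sign (lab i) j u\<bar>" if "i \<in> {1..n}" "u \<in> \<sigma>" for i u
  proof -
    have "label_sign (lab i) j u \<noteq> - s"
      using no_opposite_labels_on_simplex[OF assms that(1) i0(1) that(2) i0(2)] i0(3)
      unfolding s_def by (auto simp: label_sign_def split: if_splits)
    then show ?thesis using s label_sign_cases[of "lab i" j u] by auto
  qed
  then show ?thesis using s that by blast
next
  case False
  then show ?thesis using that[of 1] by simp
qed

lemma label_vector_antipode:
  "label_vector (vertices K) lab n (x \<circ> \<nu>) = - label_vector (vertices K) lab n x"
proof
  fix j
  have sign: "(\<Sum>i=1..n. label_sign (lab i) j (\<nu> u)) = - (\<Sum>i=1..n. label_sign (lab i) j u)"
    if u: "u \<in> vertices K" for u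
  proof -
    have "label_sign (lab i) j (\<nu> u) = - label_sign (lab i) j u" if "i \<in> {1..n}" for i
      by (rule label_sign_uminus[of "lab i", OF lab_antipode[OF that u] lab_nonzero[OF that u]])
    then show ?thesis by (simp add: sum_negf[symmetric])
  qed
  have "label_vector (vertices K) lab n (x \<circ> \<nu>) j
      = (\<Sum>u\<in>vertices K. - (x (\<nu> u) * (\<Sum>i=1..n. label_sign (lab i) j (\<nu> u))))"
  proof (unfold label_vector_def, rule sum.cong[OF refl])
    fix u assume "u \<in> vertices K"
    then show "(x \<circ> \<nu>) u * (\<Sum>i=1..n. label_sign (lab i) j u)
        = - (x (\<nu> u) * (\<Sum>i=1..n. label_sign (lab i) j (\<nu> u)))"
      using sign[OF antipode_vertex] antipode_antipode by simp
  qed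
  also have "\<dots> = - label_vector (vertices K) lab n x j"
    unfolding label_vector_def sum_negf
    using sum.reindex_bij_betw[OF bij_betw_antipode, of "\<lambda>u. x u * (\<Sum>i=1..n. label_sign (lab i) j u)"]
    by simp
  finally show "label_vector (vertices K) lab n (x \<circ> \<nu>) j = (- label_vector (vertices K) lab n x) j"
    by simp
qed

context
  fixes \<sigma> :: "'a set" and x :: "'a \<Rightarrow> real"
  assumes simplex: "\<sigma> \<in> K" and support: "\<forall>v. v \<notin> \<sigma> \<longrightarrow> x v = 0"
    and nonneg: "\<forall>v. 0 \<le> x v" and total: "sum x \<sigma> = 1"
begin

lemma finite_simplex: "finite \<sigma>"
  using finite_vertices simplex_subset_vertices[OF simplex] by (rule finite_subset[rotated])

lemma label_weight_nonneg: "0 \<le> label_weight \<sigma> x l j"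
  unfolding label_weight_def using nonneg by (simp add: sum_nonneg)

lemma label_weight_row_sum:
  assumes "i \<in> {1..n}"
  shows "(\<Sum>j=1..n. label_weight \<sigma> x (lab i) j) = 1"
proof -
  have "1 \<le> \<bar>lab i u\<bar> \<and> \<bar>lab i u\<bar> \<le> int n" if "u \<in> \<sigma>" for u
    using label_range assms simplex_subset_vertices[OF simplex] that by blast
  then show ?thesis using sum_label_weight[OF finite_simplex] total by simp
qed

lemma label_vector_signed_weight:
  "\<exists>s::real. s \<in> {-1, 1} \<and>
     (\<forall>i\<in>{1..n}. \<forall>u\<in>\<sigma>. label_sign (lab i) j u = s * \<bar>label_sign (lab i) j u\<bar>) \<and>
     label_vector (vertices K) lab n x j = s * (\<Sum>i=1..n. label_weight \<sigma> x (lab i) j)"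
proof -
  obtain s :: real where s: "s \<in> {-1, 1}"
    and uniform: "\<forall>i\<in>{1..n}. \<forall>u\<in>\<sigma>. label_sign (lab i) j u = s * \<bar>label_sign (lab i) j u\<bar>"
    using label_sign_uniform_on_simplex[OF simplex] by blast
  have "label_vector (vertices K) lab n x j = (\<Sum>u\<in>\<sigma>. x u * (\<Sum>i=1..n. label_sign (lab i) j u))"
    unfolding label_vector_def using support
    by (intro sum.mono_neutral_right finite_vertices simplex_subset_vertices[OF simplex]) auto
  also have "\<dots> = (\<Sum>i=1..n. \<Sum>u\<in>\<sigma>. x u * label_sign (lab i) j u)"
    unfolding sum_distrib_left by (rule sum.swap)
  also have "\<dots> = (\<Sum>i=1..n. \<Sum>u\<in>\<sigma>. s * (x u * \<bar>label_sign (lab i) j u\<bar>))"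
    using uniform by (intro sum.cong refl) (simp add: algebra_simps)
  also have "\<dots> = s * (\<Sum>i=1..n. label_weight \<sigma> x (lab i) j)"
    by (simp add: label_weight_def sum_distrib_left)
  finally show ?thesis using s uniform by blast
qed

lemma abs_label_vector: "\<bar>label_vector (vertices K) lab n x j\<bar> = (\<Sum>i=1..n. label_weight \<sigma> x (lab i) j)"
proof -
  obtain s :: real where "s \<in> {-1, 1}"
    "label_vector (vertices K) lab n x j = s * (\<Sum>i=1..n. label_weight \<sigma> x (lab i) j)"
    using label_vector_signed_weight by blast
  moreover have "0 \<le> (\<Sum>i=1..n. label_weight \<sigma> x (lab i) j)"
    by (intro sum_nonneg label_weight_nonneg)
  ultimately show ?thesis by (auto simp: abs_mult)
qed

lemma label_of_positive_weight:
  assumes "i \<in> {1..n}" "0 < label_weight \<sigma> x (lab i) j"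
    and "(\<Sum>i=1..n. label_weight \<sigma> x (lab i) j) = 1"
  shows "\<exists>u\<in>\<sigma>. of_int (lab i u) = label_vector (vertices K) lab n x j * real j"
proof -
  obtain s :: real where s: "s \<in> {-1, 1}"
    and uniform: "\<forall>i\<in>{1..n}. \<forall>u\<in>\<sigma>. label_sign (lab i) j u = s * \<bar>label_sign (lab i) j u\<bar>"
    and signed: "label_vector (vertices K) lab n x j = s * (\<Sum>i=1..n. label_weight \<sigma> x (lab i) j)"
    using label_vector_signed_weight by blast
  obtain u where u: "u \<in> \<sigma>" and "0 < x u * \<bar>label_sign (lab i) j u\<bar>"
    using assms(2) unfolding label_weight_def by (meson not_le sum_nonpos)
  then have "label_sign (lab i) j u \<noteq> 0" by auto
  then have "label_sign (lab i) j u = s"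
    using uniform assms(1) u s label_sign_cases[of "lab i" j u] by force
  then show ?thesis
    using label_sign_nonzero_value[of "lab i" j u] u signed assms(3) s by force
qed

lemma parallel_label_vector_witness:
  assumes "n \<ge> 1" and \<alpha>: "\<forall>j\<in>{1..n}. \<alpha> j \<in> {-1, 1}"
    and parallel: "\<forall>j\<in>{1..n}. label_vector (vertices K) lab n x j = b * of_int (\<alpha> j)"
  shows "\<bar>b\<bar> = 1"
    and "\<exists>\<pi>. \<pi> permutes {1..n} \<and>
           (\<forall>j\<in>{1..n}. \<exists>u\<in>\<sigma>. of_int (lab (\<pi> j) u) = b * of_int (\<alpha> j) * real j)"
proof -
  let ?A = "\<lambda>i j. label_weight \<sigma> x (lab i) j"
  have abs_\<alpha>: "\<bar>of_int (\<alpha> j) :: real\<bar> = 1" if "j \<in> {1..n}" for j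
    using \<alpha>[rule_format, OF that] by auto
  have col: "(\<Sum>i=1..n. ?A i j) = \<bar>b\<bar>" if "j \<in> {1..n}" for j
    using abs_label_vector[of j] parallel abs_\<alpha>[OF that] that by (simp add: abs_mult)
  have "real n = (\<Sum>i=1..n. 1)" by simp
  also have "\<dots> = (\<Sum>i=1..n. \<Sum>j=1..n. ?A i j)"
    by (rule sum.cong[OF refl]) (rule label_weight_row_sum[symmetric])
  also have "\<dots> = (\<Sum>j=1..n. \<Sum>i=1..n. ?A i j)" by (rule sum.swap)
  also have "\<dots> = (\<Sum>j=1..n. \<bar>b\<bar>)" by (rule sum.cong[OF refl]) (rule col)
  also have "\<dots> = real n * \<bar>b\<bar>" by simp
  finally show b: "\<bar>b\<bar> = 1" using assms(1) by simp
  have "\<exists>\<pi>. \<pi> permutes {1..n} \<and> (\<forall>j\<in>{1..n}. 0 < ?A (\<pi> j) j)"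
  proof (rule doubly_stochastic_positive_permutation)
    show "\<And>i. i \<in> {1..n} \<Longrightarrow> (\<Sum>j\<in>{1..n}. ?A i j) = 1" by (rule label_weight_row_sum)
    show "\<And>j. j \<in> {1..n} \<Longrightarrow> (\<Sum>i\<in>{1..n}. ?A i j) = 1" using col b by simp
  qed (simp_all add: label_weight_nonneg)
  then obtain \<pi> where \<pi>: "\<pi> permutes {1..n}" and pos: "\<forall>j\<in>{1..n}. 0 < ?A (\<pi> j) j"
    by blast
  have "\<exists>u\<in>\<sigma>. of_int (lab (\<pi> j) u) = b * of_int (\<alpha> j) * real j" if j: "j \<in> {1..n}" for j
  proof -
    have "\<pi> j \<in> {1..n}" using permutes_in_image[OF \<pi>] j by simp
    then show ?thesis using label_of_positive_weight[of "\<pi> j" j] pos parallel col b j by simp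
  qed
  with \<pi> show "\<exists>\<pi>. \<pi> permutes {1..n} \<and>
      (\<forall>j\<in>{1..n}. \<exists>u\<in>\<sigma>. of_int (lab (\<pi> j) u) = b * of_int (\<alpha> j) * real j)" by blast
qed

end

lemma witness_of_parallel_point:
  assumes "n \<ge> 1" and \<alpha>: "\<forall>j\<in>{1..n}. \<alpha> j \<in> {-1, 1}" and "x \<in> geom K"
    and parallel: "\<forall>j\<in>{1..n}. label_vector (vertices K) lab n x j = b * of_int (\<alpha> j)"
  shows "\<exists>\<sigma>\<in>K. \<exists>\<pi>. \<pi> permutes {1..n} \<and> (\<forall>j\<in>{1..n}. \<exists>u\<in>\<sigma>. lab (\<pi> j) u = \<alpha> j * int j)"
proof -
  obtain \<sigma> where \<sigma>: "\<sigma> \<in> K" "\<forall>v. v \<notin> \<sigma> \<longrightarrow> x v = 0" "sum x \<sigma> = 1"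
    and nonneg: "\<forall>v. 0 \<le> x v"
    using \<open>x \<in> geom K\<close> unfolding geom_def by blast
  note witness = parallel_label_vector_witness[OF \<sigma>(1,2) nonneg \<sigma>(3) assms(1) \<alpha> parallel]
  obtain \<pi> where \<pi>: "\<pi> permutes {1..n}"
    and lab_eq: "\<forall>j\<in>{1..n}. \<exists>u\<in>\<sigma>. of_int (lab (\<pi> j) u) = b * of_int (\<alpha> j) * real j"
    using witness(2) by blast
  have "b = 1 \<or> b = -1" using witness(1) by auto
  then show ?thesis
  proof
    assume "b = 1"
    have "\<exists>u\<in>\<sigma>. lab (\<pi> j) u = \<alpha> j * int j" if j: "j \<in> {1..n}" for j
    proof -
      obtain u where u: "u \<in> \<sigma>" and "of_int (lab (\<pi> j) u) = (of_int (\<alpha> j * int j) :: real)"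
        using lab_eq[rule_format, OF j] \<open>b = 1\<close> by auto
      then show ?thesis by (metis of_int_eq_iff)
    qed
    then show ?thesis using \<sigma>(1) \<pi> by blast
  next
    assume "b = -1"
    have "\<exists>u\<in>\<nu> ` \<sigma>. lab (\<pi> j) u = \<alpha> j * int j" if j: "j \<in> {1..n}" for j
    proof -
      obtain u where u: "u \<in> \<sigma>" and "of_int (lab (\<pi> j) u) = (of_int (- (\<alpha> j * int j)) :: real)"
        using lab_eq[rule_format, OF j] \<open>b = -1\<close> by auto
      then have "lab (\<pi> j) u = - (\<alpha> j * int j)" by (metis of_int_eq_iff)
      moreover have "\<pi> j \<in> {1..n}" using permutes_in_image[OF \<pi>] j by simp
      moreover have "u \<in> vertices K" using u simplex_subset_vertices[OF \<sigma>(1)] by blast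
      ultimately have "lab (\<pi> j) (\<nu> u) = \<alpha> j * int j" by (simp add: lab_antipode)
      then show ?thesis using u by blast
    qed
    then show ?thesis using antipode_simplex[OF \<sigma>(1)] \<pi> by blast
  qed
qed

text \<open>This is where the index enters: away from such a point, normalising the first n - 1
  coordinates of the projected label vector would be an equivariant map to the (n - 2)-sphere.\<close>
lemma exists_point_label_vector_perp_vanishing:
  assumes "n \<ge> 1" and \<alpha>: "\<forall>j\<in>{1..n}. \<alpha> j \<in> {-1, 1}" and index: "Z2_index K \<nu> = int n - 1"
  obtains x where "x \<in> geom K"
    and "\<forall>j\<in>{1..n-1}. proj_perp \<alpha> n (label_vector (vertices K) lab n x) j = 0"
proof -
  have "K \<noteq> {}" using index assms(1) by (auto simp: Z2_index_def)
  have "\<exists>x\<in>geom K. \<forall>j\<in>{1..n-1}. proj_perp \<alpha> n (label_vector (vertices K) lab n x) j = 0"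
  proof (cases "n = 1")
    case True
    then show ?thesis using geom_nonempty[OF complex \<open>K \<noteq> {}\<close>] by auto
  next
    case False
    define g where "g x k = proj_perp \<alpha> n (label_vector (vertices K) lab n x) (Suc k)" for x k
    show ?thesis
    proof (rule ccontr)
      assume none: "\<not> ?thesis"
      have "Z2_map_to_sphere K \<nu> (n - 2)"
      proof (rule Z2_map_to_sphere_normalize)
        show "continuous_on (geom K) (\<lambda>x. g x k)" for k
          unfolding g_def by (intro continuous_intros)
        show "g (x \<circ> \<nu>) = - g x" for x
          unfolding g_def label_vector_antipode proj_perp_uminus by (simp add: fun_eq_iff)
        show "\<exists>k\<le>n - 2. g x k \<noteq> 0" if x: "x \<in> geom K" for x
        proof -
          have "\<not> (\<forall>j\<in>{1..n-1}. proj_perp \<alpha> n (label_vector (vertices K) lab n x) j = 0)"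
            using none x by blast
          then obtain j where "j \<in> {1..n-1}" "proj_perp \<alpha> n (label_vector (vertices K) lab n x) j \<noteq> 0"
            by blast
          then show ?thesis unfolding g_def by (intro exI[of _ "j - 1"]) auto
        qed
      qed
      then have "Z2_index K \<nu> \<le> int (n - 2)" by (rule Z2_index_le[OF \<open>K \<noteq> {}\<close>])
      then show False using index False assms(1) by simp
    qed
  qed
  then obtain x where "x \<in> geom K" "\<forall>j\<in>{1..n-1}. proj_perp \<alpha> n (label_vector (vertices K) lab n x) j = 0"
    by blast
  then show thesis by (rule that)
qed

end


theorem proposition3p9:
  fixes K :: "'a set set" and \<nu> :: "'a \<Rightarrow> 'a" and n :: nat
    and lab :: "nat \<Rightarrow> 'a \<Rightarrow> int"
  assumes "n \<ge> 1"
    and "free_Z2_complex K \<nu>"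
    and "Z2_index K \<nu> = int n - 1"
    and "\<forall>i\<in>{1..n}. fan_labeling K \<nu> (lab i)"
    and "compatible_labelings K {1..n} lab"
    and "\<forall>i\<in>{1..n}. \<forall>v\<in>vertices K. 1 \<le> \<bar>lab i v\<bar> \<and> \<bar>lab i v\<bar> \<le> int n"
    and "\<forall>i\<in>{1..n}. \<forall>i'\<in>{1..n}. \<forall>u\<in>vertices K. lab i u + lab i' u \<noteq> 0"
  shows "\<forall>\<alpha> :: nat \<Rightarrow> int. (\<forall>j\<in>{1..n}. \<alpha> j \<in> {-1, 1}) \<longrightarrow>
           (\<exists>\<sigma>\<in>K. \<exists>\<pi>. \<pi> permutes {1..n} \<and>
              (\<forall>j\<in>{1..n}. \<exists>u\<in>\<sigma>. lab (\<pi> j) u = \<alpha> j * int j))"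
proof (intro allI impI)
  fix \<alpha> :: "nat \<Rightarrow> int"
  assume \<alpha>: "\<forall>j\<in>{1..n}. \<alpha> j \<in> {-1, 1}"
  interpret compatible_fan_labelings K \<nu> n lab
    using assms(2,4-7) by unfold_locales
  obtain x where x: "x \<in> geom K"
    and perp: "\<forall>j\<in>{1..n-1}. proj_perp \<alpha> n (label_vector (vertices K) lab n x) j = 0"
    by (rule exists_point_label_vector_perp_vanishing[OF assms(1) \<alpha> assms(3)])
  obtain b where "\<forall>j\<in>{1..n}. label_vector (vertices K) lab n x j = b * of_int (\<alpha> j)"
    using proj_perp_vanishing_imp_parallel[OF assms(1) \<alpha> perp] by blast
  then show "\<exists>\<sigma>\<in>K. \<exists>\<pi>. \<pi> permutes {1..n} \<and> (\<forall>j\<in>{1..n}. \<exists>u\<in>\<sigma>. lab (\<pi> j) u = \<alpha> j * int j)"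
    by (rule witness_of_parallel_point[OF assms(1) \<alpha> x])
qed

end
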